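(* In the setting of the context, let $W(\lambda)=U(x,\lambda)V'(x,\lambda)-U'(x,\lambda)V(x,\lambda)$ (independent of $x\in(0,1)$) for $\lambda\in\mathbb C\setminus\sigma_1$, and let $\sigma_2=\{\lambda\in\mathbb C\setminus\sigma_1: W(\lambda)=0\}$. Then $\sigma_2$ is a discrete subset of $\mathbb R\setminus\sigma_1$. If $\delta_R\delta_B>1$ and $s(\lambda)=\sin(\sqrt\lambda)/\sqrt\lambda=0$, then $\lambda\in\sigma_2$. If $\lambda\in\sigma_2$ and $U(\cdot,\lambda)$ and $V(\cdot,\lambda)$ are not identically zero (which is the case if $s(\lambda)=0$), then $\lambda$ is an eigenvalue of the operator $\mathcal L$ on the tree $\mathcal T$.
   Context: $\mathcal T$ is the infinite biregular tree (vertex classes $\mathcal V_R,\mathcal V_B$, degrees $\delta_R+1$ and $\delta_B+1$, integers $\delta_B,\delta_R\ge1$), each edge identified with $[0,1]$; $\mathcal L$ acts by $-d^2/dx^2$ on $L^2(\mathcal T)=\bigoplus_eL^2(e)$ with domain the functions continuous on $\mathcal T$, $C^1$ on edges with absolutely continuous derivative, second derivative in $L^2$, and $\sum_{e\sim v}\partial_\nu f_e(v)=0$ at every vertex (outward derivatives). With $\omega=\sqrt\lambda$: $c=\cos\omega$, $c'=-\omega\sin\omega$, $s=\sin\omega/\omega$, $s'=\cos\omega$; $M_0=\begin{pmatrix}c&s\\c'&s'\end{pmatrix}$, $J_B=\operatorname{diag}(1,1/\delta_B)$, $J_R=\operatorname{diag}(1,1/\delta_R)$, $T_0(\lambda)=J_RM_0J_BM_0$;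 $\sigma_1=\{\lambda: T_0(\lambda)$ has an eigenvalue of modulus $(\delta_B\delta_R)^{-1/2}\}$, and on $\mathbb C\setminus\sigma_1$, $\mu^-(\lambda)$ is the analytic eigenvalue of $T_0(\lambda)$ with $|\mu^-|<(\delta_B\delta_R)^{-1/2}$. On $[0,1]$: $V(x,\lambda)=sc(1+\tfrac1{\delta_B})\cos(\omega x)+[\mu^--c^2-\tfrac{sc'}{\delta_B}]\tfrac{\sin(\omega x)}{\omega}$, $U(x,\lambda)=-sc(1+\tfrac1{\delta_R})\cos(\omega(1-x))-[\mu^--c^2-\tfrac{sc'}{\delta_R}]\tfrac{\sin(\omega(1-x))}{\omega}$. Fixing an edge $e_0=\{r_0,b_0\}$ ($r_0\in\mathcal V_R$) identified with $[0,1]$, $r_0\leftrightarrow 0$, $V$ extends to the union $\mathcal T_0$ of nonbacktracking rays $r_0,b_0,r_1,\dots$ and $U$ to the union $\mathcal T_1$ of rays $b_0,r_0,b_{-1},\dots$ as square integrable solutions of $-y''=\lambda y$ satisfying the vertex conditions away from $e_0$. *)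

theory Defs
  imports "HOL-Analysis.Analysis"
begin

definition sinc_w :: "complex \<Rightarrow> complex \<Rightarrow> complex" where
  "sinc_w w z = (if w = 0 then z else sin (w * z) / w)"

definition omg :: "complex \<Rightarrow> complex" where "omg lam = csqrt lam"

definition cc :: "complex \<Rightarrow> complex" where "cc lam = cos (omg lam)"
definition cc' :: "complex \<Rightarrow> complex" where "cc' lam = - omg lam * sin (omg lam)"
definition ss :: "complex \<Rightarrow> complex" where "ss lam = sinc_w (omg lam) 1"
definition ss' :: "complex \<Rightarrow> complex" where "ss' lam = cos (omg lam)"

definition mat2 :: "complex \<Rightarrow> complex \<Rightarrow> complex \<Rightarrow> complex \<Rightarrow> complex^2^2" where
  "mat2 a b c d = vector [vector [a, b], vector [c, d]]"

definition M0 :: "complex \<Rightarrow> complex^2^2" where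
  "M0 lam = mat2 (cc lam) (ss lam) (cc' lam) (ss' lam)"

definition Jm :: "nat \<Rightarrow> complex^2^2" where
  "Jm \<delta> = mat2 1 0 0 (1 / of_nat \<delta>)"

definition T0 :: "nat \<Rightarrow> nat \<Rightarrow> complex \<Rightarrow> complex^2^2" where
  "T0 \<delta>R \<delta>B lam = Jm \<delta>R ** M0 lam ** Jm \<delta>B ** M0 lam"

definition is_eigenvalue2 :: "complex^2^2 \<Rightarrow> complex \<Rightarrow> bool" where
  "is_eigenvalue2 A \<mu> \<longleftrightarrow> (\<exists>v. v \<noteq> 0 \<and> A *v v = \<mu> *s v)"

definition rad :: "nat \<Rightarrow> nat \<Rightarrow> real" where
  "rad \<delta>R \<delta>B = 1 / sqrt (real (\<delta>B * \<delta>R))"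

definition sigma1 :: "nat \<Rightarrow> nat \<Rightarrow> complex set" where
  "sigma1 \<delta>R \<delta>B = {lam. \<exists>\<mu>. is_eigenvalue2 (T0 \<delta>R \<delta>B lam) \<mu> \<and> cmod \<mu> = rad \<delta>R \<delta>B}"

(* on C \ sigma1: the (unique) eigenvalue of T0 of modulus < (dB dR)^(-1/2) *)
definition mu_minus :: "nat \<Rightarrow> nat \<Rightarrow> complex \<Rightarrow> complex" where
  "mu_minus \<delta>R \<delta>B lam = (THE \<mu>. is_eigenvalue2 (T0 \<delta>R \<delta>B lam) \<mu> \<and> cmod \<mu> < rad \<delta>R \<delta>B)"

definition Vf :: "nat \<Rightarrow> nat \<Rightarrow> complex \<Rightarrow> real \<Rightarrow> complex" where
  "Vf \<delta>R \<delta>B lam x =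
     ss lam * cc lam * (1 + 1 / of_nat \<delta>B) * cos (omg lam * of_real x)
     + (mu_minus \<delta>R \<delta>B lam - (cc lam)\<^sup>2 - ss lam * cc' lam / of_nat \<delta>B) * sinc_w (omg lam) (of_real x)"

definition Uf :: "nat \<Rightarrow> nat \<Rightarrow> complex \<Rightarrow> real \<Rightarrow> complex" where
  "Uf \<delta>R \<delta>B lam x =
     - ss lam * cc lam * (1 + 1 / of_nat \<delta>R) * cos (omg lam * of_real (1 - x))
     - (mu_minus \<delta>R \<delta>B lam - (cc lam)\<^sup>2 - ss lam * cc' lam / of_nat \<delta>R) * sinc_w (omg lam) (of_real (1 - x))"

(* W = U V' - U' V, evaluated at the point x = 1/2 of (0,1) (it is independent of x) *)
definition Wr :: "nat \<Rightarrow> nat \<Rightarrow> complex \<Rightarrow> complex" where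
  "Wr \<delta>R \<delta>B lam =
     Uf \<delta>R \<delta>B lam (1/2) * vector_derivative (Vf \<delta>R \<delta>B lam) (at (1/2))
     - vector_derivative (Uf \<delta>R \<delta>B lam) (at (1/2)) * Vf \<delta>R \<delta>B lam (1/2)"

definition sigma2 :: "nat \<Rightarrow> nat \<Rightarrow> complex set" where
  "sigma2 \<delta>R \<delta>B = {lam. lam \<notin> sigma1 \<delta>R \<delta>B \<and> Wr \<delta>R \<delta>B lam = 0}"

(* vertices of type 'v; red v means v \<in> V_R, otherwise v \<in> V_B; adj is the edge relation *)
definition biregular_tree :: "nat \<Rightarrow> nat \<Rightarrow> ('v \<Rightarrow> bool) \<Rightarrow> ('v \<Rightarrow> 'v \<Rightarrow> bool) \<Rightarrow> bool" where
  "biregular_tree \<delta>R \<delta>B red adj \<longleftrightarrow>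
     (\<forall>u v. adj u v \<longrightarrow> adj v u) \<and>
     (\<forall>u v. adj u v \<longrightarrow> red u \<noteq> red v) \<and>
     (\<forall>v. red v \<longrightarrow> finite {u. adj v u} \<and> card {u. adj v u} = \<delta>R + 1) \<and>
     (\<forall>v. \<not> red v \<longrightarrow> finite {u. adj v u} \<and> card {u. adj v u} = \<delta>B + 1) \<and>
     (\<forall>u v. adj\<^sup>*\<^sup>* u v) \<and>
     (\<forall>u v. adj u v \<longrightarrow> \<not> (\<lambda>x y. adj x y \<and> {x, y} \<noteq> {u, v})\<^sup>*\<^sup>* u v)"

(* edges, oriented red-to-blue; edge (r,b) is identified with [0,1], r <-> 0, b <-> 1 *)
definition tree_edges :: "('v \<Rightarrow> bool) \<Rightarrow> ('v \<Rightarrow> 'v \<Rightarrow> bool) \<Rightarrow> ('v \<times> 'v) set" where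
  "tree_edges red adj = {(r, b). red r \<and> adj r b}"

definition in_L2_tree :: "('v \<Rightarrow> bool) \<Rightarrow> ('v \<Rightarrow> 'v \<Rightarrow> bool) \<Rightarrow> ('v \<Rightarrow> 'v \<Rightarrow> real \<Rightarrow> complex) \<Rightarrow> bool" where
  "in_L2_tree red adj f \<longleftrightarrow>
     (\<forall>(r, b) \<in> tree_edges red adj.
        f r b \<in> borel_measurable lborel \<and> (\<lambda>x. (cmod (f r b x))\<^sup>2) integrable_on {0..1}) \<and>
     ((\<lambda>(r, b). integral {0..1} (\<lambda>x. (cmod (f r b x))\<^sup>2)) summable_on tree_edges red adj)"

(* f in dom(L) with second derivative h (so that L f = - h):
   on each edge f is C^1 with absolutely continuous derivative f', f'(x) = f'(0) + \<integral>_0^x h,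
   h in L^2(T); f continuous at vertices; Kirchhoff condition at every vertex *)
definition in_dom_L ::
  "('v \<Rightarrow> bool) \<Rightarrow> ('v \<Rightarrow> 'v \<Rightarrow> bool) \<Rightarrow> ('v \<Rightarrow> 'v \<Rightarrow> real \<Rightarrow> complex) \<Rightarrow> ('v \<Rightarrow> 'v \<Rightarrow> real \<Rightarrow> complex) \<Rightarrow> bool" where
  "in_dom_L red adj f h \<longleftrightarrow>
     in_L2_tree red adj f \<and> in_L2_tree red adj h \<and>
     (\<forall>(r, b) \<in> tree_edges red adj. \<exists>f'.
        (\<forall>x\<in>{0..1}. (f r b has_vector_derivative f' x) (at x within {0..1})) \<and>
        (\<forall>x\<in>{0..1}. (h r b has_integral (f' x - f' 0)) {0..x})) \<and>
     (\<forall>r b b'. (r, b) \<in> tree_edges red adj \<and> (r, b') \<in> tree_edges red adj \<longrightarrow> f r b 0 = f r b' 0) \<and>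
     (\<forall>r r' b. (r, b) \<in> tree_edges red adj \<and> (r', b) \<in> tree_edges red adj \<longrightarrow> f r b 1 = f r' b 1) \<and>
     (\<forall>r. red r \<longrightarrow>
        (\<Sum>b\<in>{b. adj r b}. vector_derivative (f r b) (at 0 within {0..1})) = 0) \<and>
     (\<forall>b. \<not> red b \<longrightarrow>
        (\<Sum>r\<in>{r. adj b r}. - vector_derivative (f r b) (at 1 within {0..1})) = 0)"

definition is_eigenvalue_L :: "('v \<Rightarrow> bool) \<Rightarrow> ('v \<Rightarrow> 'v \<Rightarrow> bool) \<Rightarrow> complex \<Rightarrow> bool" where
  "is_eigenvalue_L red adj lam \<longleftrightarrow>
     (\<exists>f h. in_dom_L red adj f h \<and>
        (\<exists>(r, b) \<in> tree_edges red adj. integral {0..1} (\<lambda>x. (cmod (f r b x))\<^sup>2) \<noteq> 0) \<and>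
        (\<forall>(r, b) \<in> tree_edges red adj.
           AE x in lborel. x \<in> {0..1} \<longrightarrow> - h r b x = lam * f r b x))"

end

theory Submission
  imports Defs
begin

(* Evaluating U V' - U' V at x = 1/2 with the half-angle formulas and multiplying by mu^-, the
   characteristic equation of T_0 factors the Wronskian as
     mu^- W = -s (mu^- - 1) (mu^- + 1/delta_R) (mu^- + 1/delta_B).
   As |mu^-| < 1, W = 0 forces s = 0, or mu^- = -1/delta, which in turn forces c = 0 and makes U or V
   vanish identically; so sigma_2 lies in the lattice (pi^2/4) Z. If s = 0 then mu^- = 1/(delta_R delta_B),
   U and V are nonzero multiples of sin(omega x)/omega, and sin omega = 0. The eigenfunction is then
   F(e) sin(omega x) on each edge e, where F is a square-summable function on the edges obeying
   Kirchhoff's law at every vertex: a combination of two radial flows, which decay by the factor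
   1/delta from one generation to the next, and hence are square-summable when delta_R delta_B > 1. *)

section \<open>Eigenvalues of the transfer matrix\<close>

lemma matrix_vector_mult_mat: "mat m *v v = m *s v"
  by (simp add: vec_eq_iff matrix_vector_mult_def mat_def if_distrib[of "\<lambda>x. x * _"] cong: if_cong)

lemma is_eigenvalue2_iff_det: "is_eigenvalue2 A m \<longleftrightarrow> det (A - mat m) = 0"
proof -
  have "is_eigenvalue2 A m \<longleftrightarrow> (\<exists>v. v \<noteq> 0 \<and> (A - mat m) *v v = 0)"
    unfolding is_eigenvalue2_def by (simp add: matrix_vector_mult_diff_rdistrib matrix_vector_mult_mat)
  also have "\<dots> \<longleftrightarrow> \<not> invertible (A - mat m)"
    unfolding invertible_left_inverse matrix_left_invertible_ker by blast
  also have "\<dots> \<longleftrightarrow> det (A - mat m) = 0"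
    by (simp add: invertible_det_nz)
  finally show ?thesis .
qed

lemma is_eigenvalue2_iff:
  "is_eigenvalue2 A m \<longleftrightarrow> (A$1$1 - m) * (A$2$2 - m) - A$1$2 * A$2$1 = 0"
  unfolding is_eigenvalue2_iff_det det_2 by (simp add: mat_def)

lemma M0_det: "(cc lam)\<^sup>2 - ss lam * cc' lam = 1"
proof (cases "omg lam = 0")
  case False
  then show ?thesis using sin_cos_squared_add[of "omg lam"]
    by (simp add: cc_def ss_def cc'_def sinc_w_def field_simps power2_eq_square)
qed (simp add: cc_def ss_def cc'_def sinc_w_def)

definition T0_charpoly :: "nat \<Rightarrow> nat \<Rightarrow> complex \<Rightarrow> complex \<Rightarrow> complex" where
  "T0_charpoly \<delta>R \<delta>B lam m = (m - 1) * (m - 1 / of_nat \<delta>R * (1 / of_nat \<delta>B))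
     - ss lam * cc' lam * m * (1 + 1 / of_nat \<delta>B) * (1 + 1 / of_nat \<delta>R)"

lemma T0_entries:
  "T0 \<delta>R \<delta>B lam $1$1 = (cc lam)\<^sup>2 + ss lam * cc' lam * (1 / of_nat \<delta>B)"
  "T0 \<delta>R \<delta>B lam $1$2 = ss lam * cc lam * (1 + 1 / of_nat \<delta>B)"
  "T0 \<delta>R \<delta>B lam $2$1 = cc lam * cc' lam * (1 + 1 / of_nat \<delta>B) * (1 / of_nat \<delta>R)"
  "T0 \<delta>R \<delta>B lam $2$2 = (ss lam * cc' lam + (cc lam)\<^sup>2 * (1 / of_nat \<delta>B)) * (1 / of_nat \<delta>R)"
  unfolding T0_def Jm_def M0_def mat2_def ss'_def cc_def[symmetric]
  by (simp_all add: matrix_matrix_mult_def sum_2 algebra_simps power2_eq_square add_divide_distrib)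

lemma is_eigenvalue2_T0_iff: "is_eigenvalue2 (T0 \<delta>R \<delta>B lam) m \<longleftrightarrow> T0_charpoly \<delta>R \<delta>B lam m = 0"
proof -
  have charpoly:
    "((c\<^sup>2 + s * c' * b) - m) * ((s * c' + c\<^sup>2 * b) * r - m) - (s * c * (1 + b)) * (c * c' * (1 + b) * r)
       = (m - 1) * (m - r * b) - s * c' * m * (1 + b) * (1 + r)"
    if "c\<^sup>2 - s * c' = 1" for c s c' r b :: complex
    using that by algebra
  show ?thesis
    unfolding is_eigenvalue2_iff T0_entries T0_charpoly_def charpoly[OF M0_det]
    by (simp add: mult.commute)
qed

lemma quadratic_unique_root_inside_circle:
  fixes t d :: complex and r :: real
  assumes "r > 0" and "cmod d = r\<^sup>2"
    and no_root_on_circle: "\<And>m. m\<^sup>2 - t * m + d = 0 \<Longrightarrow> cmod m \<noteq> r"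
  shows "\<exists>!m. m\<^sup>2 - t * m + d = 0 \<and> cmod m < r"
proof -
  define q where "q = csqrt (t\<^sup>2 - 4 * d)"
  define m1 where "m1 = (t + q) / 2"
  define m2 where "m2 = (t - q) / 2"
  have "q\<^sup>2 = t\<^sup>2 - 4 * d"
    unfolding q_def by simp
  then have factor: "m\<^sup>2 - t * m + d = (m - m1) * (m - m2)" for m
    unfolding m1_def m2_def by (simp add: field_simps power2_eq_square)
  have "cmod m1 * cmod m2 = r\<^sup>2"
    using factor[of 0] assms(2) by (simp flip: norm_mult)
  moreover have "cmod m1 \<noteq> r" "cmod m2 \<noteq> r"
    using no_root_on_circle factor by auto
  ultimately have "cmod m1 < r \<longleftrightarrow> \<not> cmod m2 < r"
    using \<open>r > 0\<close> by (smt (verit) mult_strict_mono' mult_mono norm_ge_zero power2_eq_square)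
  then show ?thesis
    unfolding factor by auto
qed

lemma rad_pos: "\<delta>R \<ge> 1 \<Longrightarrow> \<delta>B \<ge> 1 \<Longrightarrow> rad \<delta>R \<delta>B > 0"
  unfolding rad_def by simp

lemma rad_sq: "\<delta>R \<ge> 1 \<Longrightarrow> \<delta>B \<ge> 1 \<Longrightarrow> (rad \<delta>R \<delta>B)\<^sup>2 = 1 / (real \<delta>R * real \<delta>B)"
  unfolding rad_def by (simp add: power_divide mult.commute)

lemma rad_less_1_iff: "\<delta>R \<ge> 1 \<Longrightarrow> \<delta>B \<ge> 1 \<Longrightarrow> rad \<delta>R \<delta>B < 1 \<longleftrightarrow> \<delta>R * \<delta>B > 1"
  unfolding rad_def by (simp add: mult.commute flip: of_nat_mult)

lemma rad_le_1: "\<delta>R \<ge> 1 \<Longrightarrow> \<delta>B \<ge> 1 \<Longrightarrow> rad \<delta>R \<delta>B \<le> 1"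
  unfolding rad_def by (simp flip: of_nat_mult)

lemma T0_charpoly_expand: "T0_charpoly \<delta>R \<delta>B lam m = m\<^sup>2 - (1 + 1 / of_nat \<delta>R * (1 / of_nat \<delta>B)
   + ss lam * cc' lam * (1 + 1 / of_nat \<delta>B) * (1 + 1 / of_nat \<delta>R)) * m + 1 / of_nat \<delta>R * (1 / of_nat \<delta>B)"
  unfolding T0_charpoly_def by algebra

lemma
  assumes "\<delta>R \<ge> 1" "\<delta>B \<ge> 1" "lam \<notin> sigma1 \<delta>R \<delta>B"
  shows T0_charpoly_mu_minus: "T0_charpoly \<delta>R \<delta>B lam (mu_minus \<delta>R \<delta>B lam) = 0"
    and norm_mu_minus_less: "cmod (mu_minus \<delta>R \<delta>B lam) < rad \<delta>R \<delta>B"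
proof -
  have "\<exists>!m. T0_charpoly \<delta>R \<delta>B lam m = 0 \<and> cmod m < rad \<delta>R \<delta>B"
    unfolding T0_charpoly_expand
  proof (rule quadratic_unique_root_inside_circle)
    show "cmod (1 / of_nat \<delta>R * (1 / of_nat \<delta>B) :: complex) = (rad \<delta>R \<delta>B)\<^sup>2"
      using assms(1,2) by (simp add: rad_sq norm_mult norm_divide)
  qed (use assms in \<open>auto simp: rad_pos sigma1_def is_eigenvalue2_T0_iff T0_charpoly_expand\<close>)
  from theI'[OF this]
  show "T0_charpoly \<delta>R \<delta>B lam (mu_minus \<delta>R \<delta>B lam) = 0" "cmod (mu_minus \<delta>R \<delta>B lam) < rad \<delta>R \<delta>B"
    unfolding mu_minus_def is_eigenvalue2_T0_iff by auto
qed

section \<open>The Wronskian and the set \<open>sigma2\<close>\<close>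

lemma has_field_derivative_sinc_w: "(sinc_w w has_field_derivative cos (w * z)) (at z)"
proof (cases "w = 0")
  case True
  then have "sinc_w w = (\<lambda>z. z)" by (auto simp: sinc_w_def)
  then show ?thesis using True by (auto intro!: derivative_eq_intros)
next
  case False
  then have "sinc_w w = (\<lambda>z. sin (w * z) / w)" by (auto simp: sinc_w_def)
  then show ?thesis using False by (auto intro!: derivative_eq_intros)
qed

lemma has_field_derivative_cos_mult:
  "((\<lambda>z. cos (w * z)) has_field_derivative - w\<^sup>2 * sinc_w w z) (at z)"
proof -
  have "- sin (w * z) * w = - w\<^sup>2 * sinc_w w z"
    by (cases "w = 0") (auto simp: sinc_w_def power2_eq_square)
  then show ?thesis
    by (auto intro!: derivative_eq_intros)
qed

lemma Vf_has_vector_derivative: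
  "(Vf \<delta>R \<delta>B lam has_vector_derivative
     ss lam * cc lam * (1 + 1 / of_nat \<delta>B) * (- (omg lam)\<^sup>2 * sinc_w (omg lam) (of_real a))
     + (mu_minus \<delta>R \<delta>B lam - (cc lam)\<^sup>2 - ss lam * cc' lam / of_nat \<delta>B) * cos (omg lam * of_real a)) (at a)"
proof -
  have "Vf \<delta>R \<delta>B lam = (\<lambda>x. (\<lambda>z. ss lam * cc lam * (1 + 1 / of_nat \<delta>B) * cos (omg lam * z)
     + (mu_minus \<delta>R \<delta>B lam - (cc lam)\<^sup>2 - ss lam * cc' lam / of_nat \<delta>B) * sinc_w (omg lam) z) (of_real x))"
    by (simp add: Vf_def fun_eq_iff)
  then show ?thesis
    by (simp only:) (intro has_vector_derivative_real_field DERIV_add DERIV_cmult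
        has_field_derivative_cos_mult has_field_derivative_sinc_w)
qed

lemma Uf_has_vector_derivative:
  "(Uf \<delta>R \<delta>B lam has_vector_derivative
     - (ss lam * cc lam * (1 + 1 / of_nat \<delta>R)) * (omg lam)\<^sup>2 * sinc_w (omg lam) (1 - of_real a)
     + (mu_minus \<delta>R \<delta>B lam - (cc lam)\<^sup>2 - ss lam * cc' lam / of_nat \<delta>R) * cos (omg lam * (1 - of_real a))) (at a)"
proof -
  define K1 where "K1 = ss lam * cc lam * (1 + 1 / of_nat \<delta>R)"
  define K2 where "K2 = mu_minus \<delta>R \<delta>B lam - (cc lam)\<^sup>2 - ss lam * cc' lam / of_nat \<delta>R"
  have "Uf \<delta>R \<delta>B lam = (\<lambda>x. (\<lambda>z. - K1 * cos (omg lam * (1 - z)) - K2 * sinc_w (omg lam) (1 - z)) (of_real x))"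
    by (simp add: Uf_def K1_def K2_def fun_eq_iff)
  moreover have "((\<lambda>z. - K1 * cos (omg lam * (1 - z)) - K2 * sinc_w (omg lam) (1 - z)) has_field_derivative
      - K1 * ((- (omg lam)\<^sup>2 * sinc_w (omg lam) (1 - of_real a)) * -1)
      - K2 * (cos (omg lam * (1 - of_real a)) * -1)) (at (of_real a))"
    by (intro DERIV_diff DERIV_cmult DERIV_chain2[OF has_field_derivative_cos_mult]
        DERIV_chain2[OF has_field_derivative_sinc_w]) (auto intro!: derivative_eq_intros)
  then have "((\<lambda>z. - K1 * cos (omg lam * (1 - z)) - K2 * sinc_w (omg lam) (1 - z)) has_field_derivative
      - K1 * (omg lam)\<^sup>2 * sinc_w (omg lam) (1 - of_real a) + K2 * cos (omg lam * (1 - of_real a))) (at (of_real a))"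
    by (simp add: algebra_simps)
  ultimately show ?thesis
    unfolding K1_def K2_def by (simp only:) (rule has_vector_derivative_real_field)
qed

lemma half_angle_formulas:
  "cc lam = (cos (omg lam / 2))\<^sup>2 - (omg lam)\<^sup>2 * (sinc_w (omg lam) (1/2))\<^sup>2"
  "ss lam = 2 * sinc_w (omg lam) (1/2) * cos (omg lam / 2)"
  "cc' lam = - 2 * (omg lam)\<^sup>2 * sinc_w (omg lam) (1/2) * cos (omg lam / 2)"
proof -
  let ?w = "omg lam"
  have sin2: "sin ?w = 2 * sin (?w/2) * cos (?w/2)" using sin_double[of "?w/2"] by simp
  have cos2: "cos ?w = (cos (?w/2))\<^sup>2 - (sin (?w/2))\<^sup>2" using cos_double[of "?w/2"] by simp
  show "cc lam = (cos (?w / 2))\<^sup>2 - ?w\<^sup>2 * (sinc_w ?w (1/2))\<^sup>2"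
    using cos2 by (cases "?w = 0") (auto simp: cc_def sinc_w_def power_divide)
  show "ss lam = 2 * sinc_w ?w (1/2) * cos (?w / 2)"
    using sin2 by (cases "?w = 0") (auto simp: ss_def sinc_w_def)
  show "cc' lam = - 2 * ?w\<^sup>2 * sinc_w ?w (1/2) * cos (?w / 2)"
    using sin2 by (cases "?w = 0") (auto simp: cc'_def sinc_w_def power2_eq_square)
qed

lemma Wr_eq:
  "Wr \<delta>R \<delta>B lam = - ss lam * ((cc lam)\<^sup>2 * (1 + 1 / of_nat \<delta>R) * (mu_minus \<delta>R \<delta>B lam - 1)
     + (mu_minus \<delta>R \<delta>B lam - (cc lam)\<^sup>2 - ss lam * cc' lam * (1 / of_nat \<delta>R)) * (mu_minus \<delta>R \<delta>B lam + 1 / of_nat \<delta>B))"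
proof -
  have wronskian_half:
    "(- (s * c * (1 + r)) * C - (m - c\<^sup>2 - s * c' * r) * S) * ((s * c * (1 + b)) * (- w\<^sup>2 * S) + (m - c\<^sup>2 - s * c' * b) * C)
     - (- (s * c * (1 + r)) * w\<^sup>2 * S + (m - c\<^sup>2 - s * c' * r) * C) * ((s * c * (1 + b)) * C + (m - c\<^sup>2 - s * c' * b) * S)
     = - s * (c\<^sup>2 * (1 + r) * (m - 1) + (m - c\<^sup>2 - s * c' * r) * (m + b))"
    if "c\<^sup>2 - s * c' = 1" "c = C\<^sup>2 - w\<^sup>2 * S\<^sup>2" "s = 2 * S * C" "c' = - 2 * w\<^sup>2 * S * C"
    for c s c' m b r C S w :: complex
  proof -
    have "(- (s * c * (1 + r)) * C - (m - c\<^sup>2 - s * c' * r) * S) * ((s * c * (1 + b)) * (- w\<^sup>2 * S) + (m - c\<^sup>2 - s * c' * b) * C)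
       - (- (s * c * (1 + r)) * w\<^sup>2 * S + (m - c\<^sup>2 - s * c' * r) * C) * ((s * c * (1 + b)) * C + (m - c\<^sup>2 - s * c' * b) * S)
       = - (s * c * (1 + b)) * (s * c * (1 + r)) * (- 2 * w\<^sup>2 * S * C) - (m - c\<^sup>2 - s * c' * b) * (m - c\<^sup>2 - s * c' * r) * (2 * S * C)
         - (C\<^sup>2 - w\<^sup>2 * S\<^sup>2) * ((s * c * (1 + r)) * (m - c\<^sup>2 - s * c' * b) + (s * c * (1 + b)) * (m - c\<^sup>2 - s * c' * r))"
      by algebra
    also have "\<dots> = - (s * c * (1 + b)) * (s * c * (1 + r)) * c' - (m - c\<^sup>2 - s * c' * b) * (m - c\<^sup>2 - s * c' * r) * s
         - c * ((s * c * (1 + r)) * (m - c\<^sup>2 - s * c' * b) + (s * c * (1 + b)) * (m - c\<^sup>2 - s * c' * r))"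
      using that by simp
    also have "\<dots> = - s * (c\<^sup>2 * (1 + r) * (m - 1) + (m - c\<^sup>2 - s * c' * r) * (m + b))"
      using that(1) by algebra
    finally show ?thesis .
  qed
  let ?w = "omg lam" and ?m = "mu_minus \<delta>R \<delta>B lam" and ?c = "cc lam" and ?s = "ss lam" and ?c' = "cc' lam"
  let ?b = "1 / of_nat \<delta>B :: complex" and ?r = "1 / of_nat \<delta>R :: complex"
  let ?S = "sinc_w ?w (1/2)" and ?C = "cos (?w / 2)"
  have "vector_derivative (Vf \<delta>R \<delta>B lam) (at (1/2)) =
      (?s * ?c * (1 + ?b)) * (- ?w\<^sup>2 * ?S) + (?m - ?c\<^sup>2 - ?s * ?c' * ?b) * ?C"
    by (simp add: vector_derivative_at[OF Vf_has_vector_derivative])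
  moreover have "vector_derivative (Uf \<delta>R \<delta>B lam) (at (1/2)) =
      - (?s * ?c * (1 + ?r)) * ?w\<^sup>2 * ?S + (?m - ?c\<^sup>2 - ?s * ?c' * ?r) * ?C"
    by (simp add: vector_derivative_at[OF Uf_has_vector_derivative])
  moreover have "Vf \<delta>R \<delta>B lam (1/2) = (?s * ?c * (1 + ?b)) * ?C + (?m - ?c\<^sup>2 - ?s * ?c' * ?b) * ?S"
    by (simp add: Vf_def)
  moreover have "Uf \<delta>R \<delta>B lam (1/2) = - (?s * ?c * (1 + ?r)) * ?C - (?m - ?c\<^sup>2 - ?s * ?c' * ?r) * ?S"
    by (simp add: Uf_def)
  ultimately show ?thesis
    unfolding Wr_def by (simp only: wronskian_half[OF M0_det half_angle_formulas])
qed

lemma mu_minus_mult_Wr: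
  assumes "\<delta>R \<ge> 1" "\<delta>B \<ge> 1" "lam \<notin> sigma1 \<delta>R \<delta>B"
  shows "mu_minus \<delta>R \<delta>B lam * Wr \<delta>R \<delta>B lam
    = - ss lam * ((mu_minus \<delta>R \<delta>B lam - 1) * (mu_minus \<delta>R \<delta>B lam + 1 / of_nat \<delta>R)
                  * (mu_minus \<delta>R \<delta>B lam + 1 / of_nat \<delta>B))"
proof -
  have factor: "m * (- s * (c\<^sup>2 * (1 + r) * (m - 1) + (m - c\<^sup>2 - P * r) * (m + b)))
      = - s * ((m - 1) * (m + r) * (m + b))"
    if "c\<^sup>2 - P = 1" "(m - 1) * (m - r * b) - P * m * (1 + b) * (1 + r) = 0" for c s P r b m :: complex
    using that by algebra
  show ?thesis
    unfolding Wr_eq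
    by (rule factor[OF M0_det]) (use T0_charpoly_mu_minus[OF assms] in \<open>simp add: T0_charpoly_def mult.assoc\<close>)
qed

lemma T0_charpoly_at_neg_inv:
  "T0_charpoly \<delta>R \<delta>B lam (- (1 / of_nat \<delta>R)) = 1 / of_nat \<delta>R * (1 + 1 / of_nat \<delta>R) * (1 + 1 / of_nat \<delta>B) * (cc lam)\<^sup>2"
  "T0_charpoly \<delta>R \<delta>B lam (- (1 / of_nat \<delta>B)) = 1 / of_nat \<delta>B * (1 + 1 / of_nat \<delta>R) * (1 + 1 / of_nat \<delta>B) * (cc lam)\<^sup>2"
proof -
  have "(- x - 1) * (- x - r * b) - P * - x * (1 + b) * (1 + r) = x * (1 + r) * (1 + b) * c\<^sup>2"
    if "c\<^sup>2 - P = 1" "x = r \<or> x = b" for c P r b x :: complex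
    using that by (elim disjE) algebra+
  note neg_root = this[OF M0_det]
  show "T0_charpoly \<delta>R \<delta>B lam (- (1 / of_nat \<delta>R)) = 1 / of_nat \<delta>R * (1 + 1 / of_nat \<delta>R) * (1 + 1 / of_nat \<delta>B) * (cc lam)\<^sup>2"
    unfolding T0_charpoly_def by (rule neg_root) simp
  show "T0_charpoly \<delta>R \<delta>B lam (- (1 / of_nat \<delta>B)) = 1 / of_nat \<delta>B * (1 + 1 / of_nat \<delta>R) * (1 + 1 / of_nat \<delta>B) * (cc lam)\<^sup>2"
    unfolding T0_charpoly_def by (rule neg_root) simp
qed

lemma one_plus_inverse_of_nat_nonzero: "(1::complex) + 1 / of_nat d \<noteq> 0"
proof -
  have "(1::complex) + 1 / of_nat d = of_real (1 + 1 / real d)"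
    by simp
  moreover have "1 + 1 / real d > 0"
    by (simp add: add_pos_nonneg)
  ultimately show ?thesis
    by (metis of_real_eq_0_iff less_irrefl)
qed

lemma sigma2_cases:
  assumes "\<delta>R \<ge> 1" "\<delta>B \<ge> 1" "lam \<in> sigma2 \<delta>R \<delta>B"
  shows "ss lam = 0 \<or> cc lam = 0 \<and> (mu_minus \<delta>R \<delta>B lam = - (1 / of_nat \<delta>R) \<or> mu_minus \<delta>R \<delta>B lam = - (1 / of_nat \<delta>B))"
proof -
  let ?m = "mu_minus \<delta>R \<delta>B lam"
  have not_sigma1: "lam \<notin> sigma1 \<delta>R \<delta>B" and "Wr \<delta>R \<delta>B lam = 0"
    using assms(3) unfolding sigma2_def by auto
  then have "ss lam * ((?m - 1) * (?m + 1 / of_nat \<delta>R) * (?m + 1 / of_nat \<delta>B)) = 0"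
    using mu_minus_mult_Wr[OF assms(1,2) not_sigma1] by simp
  moreover have "?m \<noteq> 1"
    using norm_mu_minus_less[OF assms(1,2) not_sigma1] rad_le_1[OF assms(1,2)] by auto
  ultimately have "ss lam = 0 \<or> ?m = - (1 / of_nat \<delta>R) \<or> ?m = - (1 / of_nat \<delta>B)"
    by (auto simp: add_eq_0_iff)
  moreover have "cc lam = 0" if "?m = - (1 / of_nat \<delta>R) \<or> ?m = - (1 / of_nat \<delta>B)"
    using that T0_charpoly_mu_minus[OF assms(1,2) not_sigma1] T0_charpoly_at_neg_inv assms(1,2)
    by (auto simp: one_plus_inverse_of_nat_nonzero)
  ultimately show ?thesis
    by blast
qed

lemma ss_zero_iff: "ss lam = 0 \<longleftrightarrow> omg lam \<noteq> 0 \<and> sin (omg lam) = 0"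
  unfolding ss_def sinc_w_def by auto

lemma ss_zero_or_cc_zero_imp_pi_multiple:
  assumes "ss lam = 0 \<or> cc lam = 0"
  shows "\<exists>k::int. lam = of_real (of_int k * pi\<^sup>2 / 4)"
proof -
  have lam: "lam = (omg lam)\<^sup>2"
    by (simp add: omg_def)
  obtain n :: int where "omg lam = of_real (n * pi) \<or> omg lam = of_real (n * pi) + of_real pi / 2"
    using assms sin_eq_0 cos_eq_0 unfolding ss_zero_iff cc_def by blast
  then show ?thesis
  proof
    assume "omg lam = of_real (n * pi)"
    then have "lam = of_real (of_int (4 * n\<^sup>2) * pi\<^sup>2 / 4)"
      using lam by (simp add: power_mult_distrib)
    then show ?thesis by blast
  next
    assume omg: "omg lam = of_real (n * pi) + of_real pi / 2"
    have "lam = of_real (of_int ((2 * n + 1)\<^sup>2) * pi\<^sup>2 / 4)"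
      by (subst lam) (simp add: omg power2_eq_square field_simps)
    then show ?thesis by blast
  qed
qed

lemma uniform_discrete_int_multiples:
  assumes "c > 0"
  shows "uniform_discrete (range (\<lambda>k::int. complex_of_real (of_int k * c)))"
proof (rule uniformI1[OF assms])
  fix x y assume "x \<in> range (\<lambda>k::int. complex_of_real (of_int k * c))" "y \<in> range (\<lambda>k::int. complex_of_real (of_int k * c))"
    and close: "dist x y < c"
  then obtain k l :: int where kl: "x = of_real (of_int k * c)" "y = of_real (of_int l * c)"
    by blast
  have "dist x y = \<bar>of_int (k - l)\<bar> * c"
    unfolding kl dist_of_real dist_real_def using assms by (simp add: abs_mult flip: left_diff_distrib)
  then have "\<bar>of_int (k - l) :: real\<bar> < 1"
    using close assms by simp
  then have "k = l"
    by linarith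
  then show "x = y"
    unfolding kl by simp
qed

lemma sigma2_real_discrete:
  assumes "\<delta>R \<ge> 1" "\<delta>B \<ge> 1"
  shows "sigma2 \<delta>R \<delta>B \<subseteq> \<real> - sigma1 \<delta>R \<delta>B \<and> discrete (sigma2 \<delta>R \<delta>B)"
proof -
  have "sigma2 \<delta>R \<delta>B \<subseteq> range (\<lambda>k::int. complex_of_real (of_int k * (pi\<^sup>2 / 4)))"
    using sigma2_cases[OF assms] ss_zero_or_cc_zero_imp_pi_multiple by fastforce
  then show ?thesis
    using uniform_discrete_imp_discrete[OF uniform_discrete_int_multiples, of "pi\<^sup>2 / 4"]
    unfolding sigma2_def by auto
qed

lemma T0_charpoly_ss_zero:
  "ss lam = 0 \<Longrightarrow> T0_charpoly \<delta>R \<delta>B lam m = (m - 1) * (m - 1 / of_nat \<delta>R * (1 / of_nat \<delta>B))"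
  unfolding T0_charpoly_def by simp

lemma norm_inverse_of_nat_mult: "cmod (1 / of_nat \<delta>R * (1 / of_nat \<delta>B) :: complex) = 1 / (real \<delta>R * real \<delta>B)"
  by (simp add: norm_mult norm_divide)

lemma ss_zero_in_sigma2:
  assumes "\<delta>R * \<delta>B > 1" "ss lam = 0"
  shows "lam \<in> sigma2 \<delta>R \<delta>B"
proof -
  have "\<delta>R \<ge> 1" "\<delta>B \<ge> 1"
    using assms(1) by (cases "\<delta>R = 0"; cases "\<delta>B = 0"; simp)+
  then have rad: "0 < rad \<delta>R \<delta>B" "rad \<delta>R \<delta>B < 1" "(rad \<delta>R \<delta>B)\<^sup>2 = 1 / (real \<delta>R * real \<delta>B)"
    using assms(1) by (simp_all add: rad_pos rad_less_1_iff rad_sq)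
  have "cmod m \<noteq> rad \<delta>R \<delta>B" if "T0_charpoly \<delta>R \<delta>B lam m = 0" for m
  proof -
    have "m = 1 \<or> m = 1 / of_nat \<delta>R * (1 / of_nat \<delta>B)"
      using that unfolding T0_charpoly_ss_zero[OF assms(2)] by simp
    moreover have "(rad \<delta>R \<delta>B)\<^sup>2 \<noteq> rad \<delta>R \<delta>B"
      using rad(1,2) by (simp add: power2_eq_square)
    ultimately show ?thesis
      using rad norm_inverse_of_nat_mult[of \<delta>R \<delta>B] by auto
  qed
  then have "lam \<notin> sigma1 \<delta>R \<delta>B"
    unfolding sigma1_def is_eigenvalue2_T0_iff by blast
  moreover have "Wr \<delta>R \<delta>B lam = 0"
    unfolding Wr_eq using assms(2) by simp
  ultimately show ?thesis
    unfolding sigma2_def by blast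
qed

lemma
  assumes "\<delta>R \<ge> 1" "\<delta>B \<ge> 1" "lam \<notin> sigma1 \<delta>R \<delta>B" "ss lam = 0"
  shows mu_minus_ss_zero: "mu_minus \<delta>R \<delta>B lam = 1 / of_nat \<delta>R * (1 / of_nat \<delta>B)"
    and ss_zero_imp_mult_gt_1: "\<delta>R * \<delta>B > 1"
proof -
  let ?m = "mu_minus \<delta>R \<delta>B lam"
  have "cmod ?m < 1"
    using norm_mu_minus_less[OF assms(1-3)] rad_le_1[OF assms(1,2)] by linarith
  then show m: "?m = 1 / of_nat \<delta>R * (1 / of_nat \<delta>B)"
    using T0_charpoly_mu_minus[OF assms(1-3)] unfolding T0_charpoly_ss_zero[OF assms(4)] by auto
  have "(rad \<delta>R \<delta>B)\<^sup>2 < rad \<delta>R \<delta>B"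
    using norm_mu_minus_less[OF assms(1-3)] unfolding m norm_inverse_of_nat_mult rad_sq[OF assms(1,2)] .
  then have "rad \<delta>R \<delta>B < 1"
    using rad_pos[OF assms(1,2)] by (simp add: power2_eq_square)
  then show "\<delta>R * \<delta>B > 1"
    using rad_less_1_iff[OF assms(1,2)] by blast
qed

lemma sin_mult_nonzero_somewhere:
  fixes w :: complex
  assumes "w \<noteq> 0" "sin w = 0"
  shows "\<exists>x\<in>{0..1}. sin (w * of_real x) \<noteq> 0"
proof -
  obtain n :: int where n: "w = of_real (n * pi)"
    using assms(2) sin_eq_0 by blast
  then have "n \<noteq> 0"
    using assms(1) by auto
  define x where "x = 1 / (2 * \<bar>real_of_int n\<bar>)"
  have "x \<in> {0..1}"
    unfolding x_def using \<open>n \<noteq> 0\<close> by (auto simp: field_simps)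
  moreover have "w * of_real x = of_real (n * pi * x)"
    unfolding n by simp
  moreover have "n * pi * x = (if n > 0 then pi / 2 else - (pi / 2))"
    unfolding x_def using \<open>n \<noteq> 0\<close> by (auto simp: field_simps)
  ultimately have "sin (w * of_real x) = of_real (if n > 0 then 1 else -1)"
    by (simp add: sin_of_real[symmetric] del: sin_of_real)
  then show ?thesis
    using \<open>x \<in> {0..1}\<close> by (intro bexI[of _ x]) auto
qed

lemma
  assumes "\<delta>R \<ge> 1" "\<delta>B \<ge> 1" "lam \<in> sigma2 \<delta>R \<delta>B" "ss lam = 0"
  shows Uf_nonzero_ss_zero: "\<exists>x\<in>{0..1}. Uf \<delta>R \<delta>B lam x \<noteq> 0"
    and Vf_nonzero_ss_zero: "\<exists>x\<in>{0..1}. Vf \<delta>R \<delta>B lam x \<noteq> 0"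
proof -
  have not_sigma1: "lam \<notin> sigma1 \<delta>R \<delta>B"
    using assms(3) unfolding sigma2_def by auto
  let ?k = "1 / of_nat \<delta>R * (1 / of_nat \<delta>B) - 1 :: complex"
  have "?k \<noteq> 0"
    using ss_zero_imp_mult_gt_1[OF assms(1,2) not_sigma1 assms(4)] assms(1,2)
    by (auto simp: field_simps simp flip: of_nat_mult)
  have "(cc lam)\<^sup>2 = 1"
    using M0_det[of lam] assms(4) by simp
  then have V: "Vf \<delta>R \<delta>B lam x = ?k * sinc_w (omg lam) (of_real x)"
    and U: "Uf \<delta>R \<delta>B lam (1 - x) = - ?k * sinc_w (omg lam) (of_real x)" for x
    using assms(4) mu_minus_ss_zero[OF assms(1,2) not_sigma1 assms(4)]
    unfolding Vf_def Uf_def by (simp_all add: algebra_simps)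
  obtain x where x: "x \<in> {0..1}" "sin (omg lam * of_real x) \<noteq> 0"
    using sin_mult_nonzero_somewhere assms(4) unfolding ss_zero_iff by blast
  then have "sinc_w (omg lam) (of_real x) \<noteq> 0"
    using assms(4) unfolding ss_zero_iff sinc_w_def by simp
  moreover have "1 - x \<in> {0..1}"
    using x(1) by simp
  ultimately show "\<exists>x\<in>{0..1}. Vf \<delta>R \<delta>B lam x \<noteq> 0" "\<exists>x\<in>{0..1}. Uf \<delta>R \<delta>B lam x \<noteq> 0"
    using V U x(1) \<open>?k \<noteq> 0\<close> by (metis mult_eq_0_iff neg_equal_0_iff_equal)+
qed

lemma sigma2_nonvanishing_imp_ss_zero:
  assumes "\<delta>R \<ge> 1" "\<delta>B \<ge> 1" "lam \<in> sigma2 \<delta>R \<delta>B"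
    and "\<exists>x\<in>{0..1}. Uf \<delta>R \<delta>B lam x \<noteq> 0" "\<exists>x\<in>{0..1}. Vf \<delta>R \<delta>B lam x \<noteq> 0"
  shows "ss lam = 0"
proof (rule ccontr)
  assume "ss lam \<noteq> 0"
  then have "cc lam = 0" and mu: "mu_minus \<delta>R \<delta>B lam = - (1 / of_nat \<delta>R) \<or> mu_minus \<delta>R \<delta>B lam = - (1 / of_nat \<delta>B)"
    using sigma2_cases[OF assms(1-3)] by auto
  moreover have "ss lam * cc' lam = -1"
    using M0_det[of lam] \<open>cc lam = 0\<close> by algebra
  ultimately have "(\<forall>x. Uf \<delta>R \<delta>B lam x = 0) \<or> (\<forall>x. Vf \<delta>R \<delta>B lam x = 0)"
    unfolding Uf_def Vf_def by auto
  then show False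
    using assms(4,5) by blast
qed

section \<open>Square-summable Kirchhoff flows on the tree\<close>

lemma square_summable_on_add:
  fixes f g :: "'a \<Rightarrow> real"
  assumes "(\<lambda>x. (f x)\<^sup>2) summable_on A" "(\<lambda>x. (g x)\<^sup>2) summable_on A"
  shows "(\<lambda>x. (f x + g x)\<^sup>2) summable_on A"
proof (rule summable_on_comparison_test)
  show "(\<lambda>x. 2 * (f x)\<^sup>2 + 2 * (g x)\<^sup>2) summable_on A"
    by (intro summable_on_add summable_on_cmult_right assms)
  show "(f x + g x)\<^sup>2 \<le> 2 * (f x)\<^sup>2 + 2 * (g x)\<^sup>2" for x
    using sum_squares_ge_zero[of "f x - g x" 0] by (simp add: power2_eq_square algebra_simps)
qed simp

lemma square_summable_on_cmult:
  fixes f :: "'a \<Rightarrow> real"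
  assumes "(\<lambda>x. (f x)\<^sup>2) summable_on A"
  shows "(\<lambda>x. (c * f x)\<^sup>2) summable_on A"
  using summable_on_cmult_right[OF assms, of "c\<^sup>2"] by (simp add: power_mult_distrib)

definition is_kirchhoff_flow :: "('v \<Rightarrow> bool) \<Rightarrow> ('v \<Rightarrow> 'v \<Rightarrow> bool) \<Rightarrow> ('v \<Rightarrow> 'v \<Rightarrow> real) \<Rightarrow> bool" where
  "is_kirchhoff_flow red adj F \<longleftrightarrow>
     (\<forall>r. red r \<longrightarrow> (\<Sum>b\<in>{b. adj r b}. F r b) = 0) \<and>
     (\<forall>b. \<not> red b \<longrightarrow> (\<Sum>r\<in>{r. adj b r}. F r b) = 0)"

lemma rtranclp_symmetric:
  assumes "\<And>x y. R x y \<Longrightarrow> R y x" "R\<^sup>*\<^sup>* x y"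
  shows "R\<^sup>*\<^sup>* y x"
  using assms(2) by induction (use assms(1) in \<open>auto intro: converse_rtranclp_into_rtranclp\<close>)

locale bireg_tree =
  fixes \<delta>R \<delta>B :: nat and red :: "'v \<Rightarrow> bool" and adj :: "'v \<Rightarrow> 'v \<Rightarrow> bool"
  assumes biregular: "biregular_tree \<delta>R \<delta>B red adj"
    and \<delta>R_ge_1: "\<delta>R \<ge> 1" and \<delta>B_ge_1: "\<delta>B \<ge> 1"
begin

definition branching :: "'v \<Rightarrow> nat" where
  "branching v = (if red v then \<delta>R else \<delta>B)"

lemma adj_sym: "adj u v \<Longrightarrow> adj v u"
  using biregular unfolding biregular_tree_def by blast

lemma adj_colour: "adj u v \<Longrightarrow> red u \<noteq> red v"
  using biregular unfolding biregular_tree_def by blast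

lemma finite_neighbours: "finite {u. adj v u}"
  using biregular unfolding biregular_tree_def by (cases "red v") auto

lemma card_neighbours: "card {u. adj v u} = branching v + 1"
  using biregular unfolding biregular_tree_def branching_def by (cases "red v") auto

lemma connected: "adj\<^sup>*\<^sup>* u v"
  using biregular unfolding biregular_tree_def by blast

lemma edge_is_bridge: "adj u v \<Longrightarrow> \<not> (\<lambda>x y. adj x y \<and> {x, y} \<noteq> {u, v})\<^sup>*\<^sup>* u v"
  using biregular unfolding biregular_tree_def by blast

definition gdist :: "'v \<Rightarrow> 'v \<Rightarrow> nat" where
  "gdist \<rho> v = (LEAST n. (adj ^^ n) \<rho> v)"

lemma relpowp_gdist: "(adj ^^ gdist \<rho> v) \<rho> v"
proof -
  obtain n where "(adj ^^ n) \<rho> v"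
    using rtranclp_imp_relpowp[OF connected] by blast
  then show ?thesis
    unfolding gdist_def by (rule LeastI)
qed

lemma gdist_le: "(adj ^^ n) \<rho> v \<Longrightarrow> gdist \<rho> v \<le> n"
  unfolding gdist_def by (rule Least_le)

lemma gdist_eq_0_iff [simp]: "gdist \<rho> v = 0 \<longleftrightarrow> v = \<rho>"
  using relpowp_gdist[of \<rho> v] gdist_le[of 0 \<rho> \<rho>] by auto

lemma gdist_self [simp]: "gdist \<rho> \<rho> = 0"
  by simp

lemma red_iff_even_length:
  "(adj ^^ n) \<rho> v \<Longrightarrow> red v \<longleftrightarrow> (red \<rho> \<longleftrightarrow> even n)"
proof (induction n arbitrary: v)
  case (Suc n)
  then obtain u where "(adj ^^ n) \<rho> u" "adj u v"
    by (meson relpowp_Suc_E)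
  then show ?case
    using Suc.IH adj_colour by fastforce
qed simp

definition level_branching :: "'v \<Rightarrow> nat \<Rightarrow> nat" where
  "level_branching \<rho> k = (if red \<rho> \<longleftrightarrow> even k then \<delta>R else \<delta>B)"

lemma branching_eq_level_branching: "branching v = level_branching \<rho> (gdist \<rho> v)"
  using red_iff_even_length[OF relpowp_gdist[of \<rho> v]]
  unfolding branching_def level_branching_def by auto

lemma level_branching_ge_1: "level_branching \<rho> k \<ge> 1"
  using \<delta>R_ge_1 \<delta>B_ge_1 unfolding level_branching_def by auto

lemma level_branching_mult_Suc: "level_branching \<rho> k * level_branching \<rho> (Suc k) = \<delta>R * \<delta>B"
  unfolding level_branching_def by auto

lemma gdist_adj: "adj u v \<Longrightarrow> gdist \<rho> v = Suc (gdist \<rho> u) \<or> gdist \<rho> u = Suc (gdist \<rho> v)"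
proof -
  assume "adj u v"
  then have "gdist \<rho> v \<le> Suc (gdist \<rho> u)" "gdist \<rho> u \<le> Suc (gdist \<rho> v)"
    using gdist_le[OF relpowp_Suc_I[OF relpowp_gdist]] adj_sym by blast+
  moreover have "gdist \<rho> u \<noteq> gdist \<rho> v"
    using red_iff_even_length[OF relpowp_gdist[of \<rho> u]] red_iff_even_length[OF relpowp_gdist[of \<rho> v]]
      adj_colour[OF \<open>adj u v\<close>] by auto
  ultimately show ?thesis
    by linarith
qed

lemma exists_parent:
  assumes "gdist \<rho> v = Suc n"
  obtains u where "adj v u" "gdist \<rho> u = n"
proof -
  have "(adj ^^ Suc n) \<rho> v"
    using relpowp_gdist[of \<rho> v] assms by simp
  then obtain u where u: "(adj ^^ n) \<rho> u" "adj u v"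
    by (meson relpowp_Suc_E)
  then have "gdist \<rho> u = n"
    using gdist_le[OF u(1)] gdist_adj[OF u(2), of \<rho>] assms by linarith
  then show ?thesis
    using that adj_sym[OF u(2)] by blast
qed

text \<open>Deleting the edge from \<open>v\<close> to one parent would leave \<open>v\<close> connected to that parent
  through the root and the other parent, so the edge would not be a bridge.\<close>
lemma unique_parent:
  assumes v: "gdist \<rho> v = Suc n" and "adj v p1" "adj v p2" "gdist \<rho> p1 = n" "gdist \<rho> p2 = n"
  shows "p1 = p2"
proof (rule ccontr)
  assume "p1 \<noteq> p2"
  define G where "G = (\<lambda>x y. adj x y \<and> {x, y} \<noteq> {p1, v})"
  have G_sym: "G x y \<Longrightarrow> G y x" for x y
    unfolding G_def using adj_sym by (auto simp: insert_commute)
  have root_reaches: "G\<^sup>*\<^sup>* \<rho> u" if "gdist \<rho> u = k" "k \<le> n" for k u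
    using that
  proof (induction k arbitrary: u)
    case (Suc k)
    obtain w where w: "adj u w" "gdist \<rho> w = k"
      using exists_parent[OF Suc.prems(1)] by blast
    have "v \<noteq> u" "v \<noteq> w"
      using v Suc.prems w(2) by auto
    then have "{w, u} \<noteq> {p1, v}"
      by auto
    then have "G w u"
      unfolding G_def using adj_sym[OF w(1)] by blast
    with Suc.IH[OF w(2)] Suc.prems(2) show ?case
      by (simp add: rtranclp.rtrancl_into_rtrancl)
  qed simp
  have "G p2 v"
    using v assms(5) \<open>p1 \<noteq> p2\<close> adj_sym[OF assms(3)] unfolding G_def by (auto simp: doubleton_eq_iff)
  with rtranclp_symmetric[OF G_sym root_reaches[OF assms(4)]] root_reaches[OF assms(5)]
  have "G\<^sup>*\<^sup>* p1 v"
    by (meson rtranclp.rtrancl_into_rtrancl rtranclp_trans order_refl)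
  then show False
    using edge_is_bridge[OF adj_sym[OF assms(2)]] unfolding G_def by blast
qed

lemma children_eq_branching:
  assumes "gdist \<rho> v = Suc n" "adj v p" "gdist \<rho> p = n"
  shows "{u. adj v u} - {p} = {u. adj v u \<and> gdist \<rho> u = Suc (Suc n)}"
proof -
  have "gdist \<rho> u = Suc (Suc n) \<longleftrightarrow> u \<noteq> p" if "adj v u" for u
    using gdist_adj[OF that, of \<rho>] unique_parent[OF assms(1,2) that assms(3)] assms by auto
  then show ?thesis
    by auto
qed

definition level :: "'v \<Rightarrow> nat \<Rightarrow> 'v set" where
  "level \<rho> n = {v. gdist \<rho> v = n}"

lemma level_Suc_subset: "level \<rho> (Suc n) \<subseteq> (\<Union>u\<in>level \<rho> n. {w. adj u w} \<inter> level \<rho> (Suc n))"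
proof
  fix v assume "v \<in> level \<rho> (Suc n)"
  moreover obtain u where "adj v u" "gdist \<rho> u = n"
    using exists_parent \<open>v \<in> level \<rho> (Suc n)\<close> unfolding level_def by blast
  ultimately show "v \<in> (\<Union>u\<in>level \<rho> n. {w. adj u w} \<inter> level \<rho> (Suc n))"
    using adj_sym unfolding level_def by blast
qed

lemma finite_level: "finite (level \<rho> n)"
proof (induction n)
  case 0
  have "level \<rho> 0 = {\<rho>}"
    unfolding level_def by auto
  then show ?case by simp
next
  case (Suc n)
  show ?case
    by (rule finite_subset[OF level_Suc_subset]) (use Suc finite_neighbours in auto)
qed

lemma card_level_Suc_le:
  assumes "n \<ge> 1"
  shows "card (level \<rho> (Suc n)) \<le> level_branching \<rho> n * card (level \<rho> n)"
proof -
  have "card (level \<rho> (Suc n)) \<le> card (\<Union>u\<in>level \<rho> n. {w. adj u w} \<inter> level \<rho> (Suc n))"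
    by (rule card_mono[OF _ level_Suc_subset]) (use finite_level finite_neighbours in auto)
  also have "\<dots> \<le> (\<Sum>u\<in>level \<rho> n. card ({w. adj u w} \<inter> level \<rho> (Suc n)))"
    by (rule card_UN_le[OF finite_level])
  also have "\<dots> \<le> (\<Sum>u\<in>level \<rho> n. level_branching \<rho> n)"
  proof (rule sum_mono)
    fix u assume u: "u \<in> level \<rho> n"
    obtain m where m: "n = Suc m"
      using assms by (cases n) auto
    obtain p where p: "adj u p" "gdist \<rho> p = m"
      using exists_parent[of \<rho> u m] u m unfolding level_def by auto
    have "{w. adj u w} \<inter> level \<rho> (Suc n) = {w. adj u w} - {p}"
      using children_eq_branching[of \<rho> u m p] u m p unfolding level_def by auto
    also have "card \<dots> = branching u"
      using p(1) card_neighbours[of u] finite_neighbours[of u] by simp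
    also have "\<dots> = level_branching \<rho> n"
      using branching_eq_level_branching[of u \<rho>] u unfolding level_def by simp
    finally show "card ({w. adj u w} \<inter> level \<rho> (Suc n)) \<le> level_branching \<rho> n"
      by simp
  qed
  finally show ?thesis
    by (simp add: mult.commute)
qed

fun radial_weight :: "'v \<Rightarrow> nat \<Rightarrow> real" where
  "radial_weight \<rho> 0 = 1"
| "radial_weight \<rho> (Suc n) = - radial_weight \<rho> n / level_branching \<rho> (Suc n)"

definition radial_flow :: "'v \<Rightarrow> 'v \<Rightarrow> 'v \<Rightarrow> real" where
  "radial_flow \<rho> u v = radial_weight \<rho> (min (gdist \<rho> u) (gdist \<rho> v))"

lemma radial_flow_sym: "radial_flow \<rho> u v = radial_flow \<rho> v u"
  unfolding radial_flow_def by (simp add: min.commute)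

lemma sum_radial_flow:
  "(\<Sum>u\<in>{u. adj v u}. radial_flow \<rho> v u) = (if v = \<rho> then real (branching \<rho> + 1) else 0)"
proof (cases "v = \<rho>")
  case True
  then show ?thesis
    using card_neighbours[of \<rho>] unfolding radial_flow_def by simp
next
  case False
  then obtain n where n: "gdist \<rho> v = Suc n"
    using not0_implies_Suc by fastforce
  obtain p where p: "adj v p" "gdist \<rho> p = n"
    using exists_parent[OF n] by blast
  have children: "radial_flow \<rho> v u = radial_weight \<rho> (Suc n)" if "u \<in> {u. adj v u} - {p}" for u
    using that children_eq_branching[OF n p] n unfolding radial_flow_def by auto
  have "(\<Sum>u\<in>{u. adj v u}. radial_flow \<rho> v u) = radial_flow \<rho> v p + (\<Sum>u\<in>{u. adj v u} - {p}. radial_flow \<rho> v u)"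
    using p(1) finite_neighbours by (simp add: sum.remove)
  also have "\<dots> = radial_weight \<rho> n + card ({u. adj v u} - {p}) * radial_weight \<rho> (Suc n)"
    using children n p(2) unfolding radial_flow_def by simp
  also have "card ({u. adj v u} - {p}) = level_branching \<rho> (Suc n)"
    using p(1) card_neighbours[of v] finite_neighbours[of v] branching_eq_level_branching[of v \<rho>] n by simp
  finally show ?thesis
    using False level_branching_ge_1[of \<rho> "Suc n"] by simp
qed

(* the squared radial flow summed over the edges between levels n - 1 and n *)
definition level_mass :: "'v \<Rightarrow> nat \<Rightarrow> real" where
  "level_mass \<rho> n = card (level \<rho> n) * (radial_weight \<rho> (n - 1))\<^sup>2"

lemma level_mass_nonneg: "level_mass \<rho> n \<ge> 0"
  unfolding level_mass_def by simp

lemma level_mass_Suc_le: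
  assumes "n \<ge> 1"
  shows "level_mass \<rho> (Suc n) * level_branching \<rho> n \<le> level_mass \<rho> n"
proof -
  obtain m where m: "n = Suc m"
    using assms by (cases n) auto
  define d where "d = real (level_branching \<rho> n)"
  have "d > 0"
    using level_branching_ge_1[of \<rho> n] unfolding d_def by simp
  have weight: "(radial_weight \<rho> n)\<^sup>2 * d = (radial_weight \<rho> (n - 1))\<^sup>2 / d"
    using \<open>d > 0\<close> unfolding m d_def by (simp add: power2_eq_square)
  have card: "real (card (level \<rho> (Suc n))) \<le> d * card (level \<rho> n)"
    using card_level_Suc_le[OF assms, of \<rho>] unfolding d_def by (simp flip: of_nat_mult)
  have "level_mass \<rho> (Suc n) * d = card (level \<rho> (Suc n)) * ((radial_weight \<rho> n)\<^sup>2 * d)"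
    unfolding level_mass_def by simp
  also have "\<dots> = card (level \<rho> (Suc n)) * (radial_weight \<rho> (n - 1))\<^sup>2 / d"
    unfolding weight by simp
  also have "\<dots> \<le> d * card (level \<rho> n) * (radial_weight \<rho> (n - 1))\<^sup>2 / d"
    by (intro divide_right_mono mult_right_mono card) (use \<open>d > 0\<close> in auto)
  also have "\<dots> = level_mass \<rho> n"
    unfolding level_mass_def using \<open>d > 0\<close> by simp
  finally show ?thesis
    unfolding d_def .
qed

lemma level_mass_Suc_Suc_le:
  assumes "n \<ge> 1" "\<delta>R * \<delta>B > 1"
  shows "2 * level_mass \<rho> (Suc (Suc n)) \<le> level_mass \<rho> n"
proof -
  define d0 where "d0 = real (level_branching \<rho> n)"
  define d1 where "d1 = real (level_branching \<rho> (Suc n))"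
  have "level_mass \<rho> (Suc (Suc n)) * d1 * d0 \<le> level_mass \<rho> (Suc n) * d0"
    using level_mass_Suc_le[of "Suc n" \<rho>] unfolding d1_def d0_def by (simp add: mult_right_mono)
  also have "\<dots> \<le> level_mass \<rho> n"
    using level_mass_Suc_le[OF assms(1)] unfolding d0_def .
  finally have "level_mass \<rho> (Suc (Suc n)) * (d0 * d1) \<le> level_mass \<rho> n"
    by (simp add: mult_ac)
  moreover have "d0 * d1 \<ge> 2"
    using level_branching_mult_Suc[of \<rho> n] assms(2) unfolding d0_def d1_def
    by (simp flip: of_nat_mult)
  ultimately show ?thesis
    using mult_left_mono[OF \<open>d0 * d1 \<ge> 2\<close> level_mass_nonneg[of \<rho> "Suc (Suc n)"]] by (simp add: mult.commute)
qed

lemma sum_level_mass_le: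
  assumes "\<delta>R * \<delta>B > 1"
  shows "(\<Sum>n\<in>{1..M}. level_mass \<rho> n) \<le> 2 * level_mass \<rho> 1 + 2 * level_mass \<rho> 2"
proof -
  have "(\<Sum>n\<in>{1..M}. level_mass \<rho> n) + 2 * level_mass \<rho> (Suc M) + 2 * level_mass \<rho> (Suc (Suc M))
      \<le> 2 * level_mass \<rho> 1 + 2 * level_mass \<rho> 2"
  proof (induction M)
    case (Suc M)
    then show ?case
      using level_mass_Suc_Suc_le[of "Suc M", OF _ assms, of \<rho>] by simp
  qed (simp add: numeral_2_eq_2)
  then show ?thesis
    using level_mass_nonneg[of \<rho>] by (smt (verit))
qed

lemma summable_radial_weight_sq:
  assumes "\<delta>R * \<delta>B > 1"
  shows "(\<lambda>v. (radial_weight \<rho> (gdist \<rho> v - 1))\<^sup>2) summable_on - {\<rho>}"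
proof (rule nonneg_bdd_above_summable_on)
  let ?f = "\<lambda>v. (radial_weight \<rho> (gdist \<rho> v - 1))\<^sup>2"
  show "bdd_above (sum ?f ` {F. F \<subseteq> - {\<rho>} \<and> finite F})"
  proof (rule bdd_aboveI2)
    fix F assume F: "F \<in> {F. F \<subseteq> - {\<rho>} \<and> finite F}"
    define M where "M = Max (insert 0 (gdist \<rho> ` F))"
    have "F \<subseteq> (\<Union>n\<in>{1..M}. level \<rho> n)"
    proof
      fix v assume "v \<in> F"
      then have "v \<noteq> \<rho>" "gdist \<rho> v \<le> M"
        using F unfolding M_def by (auto intro!: Max_ge)
      then show "v \<in> (\<Union>n\<in>{1..M}. level \<rho> n)"
        unfolding level_def by (cases "gdist \<rho> v") auto
    qed
    then have "sum ?f F \<le> sum ?f (\<Union>n\<in>{1..M}. level \<rho> n)"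
      by (intro sum_mono2) (use finite_level in auto)
    also have "\<dots> = (\<Sum>n\<in>{1..M}. sum ?f (level \<rho> n))"
      by (rule sum.UNION_disjoint) (auto simp: finite_level[unfolded level_def] level_def)
    also have "\<dots> = (\<Sum>n\<in>{1..M}. level_mass \<rho> n)"
      by (intro sum.cong refl) (simp add: level_mass_def level_def)
    also have "\<dots> \<le> 2 * level_mass \<rho> 1 + 2 * level_mass \<rho> 2"
      by (rule sum_level_mass_le[OF assms])
    finally show "sum ?f F \<le> 2 * level_mass \<rho> 1 + 2 * level_mass \<rho> 2" .
  qed
qed simp

definition outer_end :: "'v \<Rightarrow> 'v \<times> 'v \<Rightarrow> 'v" where
  "outer_end \<rho> = (\<lambda>(u, v). if gdist \<rho> u < gdist \<rho> v then v else u)"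

lemma outer_end_edge:
  assumes "adj u v"
  obtains w where "{u, v} = {outer_end \<rho> (u, v), w}" "adj (outer_end \<rho> (u, v)) w"
    "gdist \<rho> (outer_end \<rho> (u, v)) = Suc (gdist \<rho> w)"
proof (cases "gdist \<rho> u < gdist \<rho> v")
  case True
  then show ?thesis
    using that[of u] gdist_adj[OF assms, of \<rho>] adj_sym[OF assms] unfolding outer_end_def
    by (auto simp: insert_commute)
next
  case False
  then show ?thesis
    using that[of v] gdist_adj[OF assms, of \<rho>] assms unfolding outer_end_def by auto
qed

lemma radial_flow_eq_outer_end:
  "adj u v \<Longrightarrow> radial_flow \<rho> u v = radial_weight \<rho> (gdist \<rho> (outer_end \<rho> (u, v)) - 1)"
  using gdist_adj[of u v \<rho>] unfolding radial_flow_def outer_end_def by auto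

lemma inj_on_outer_end: "inj_on (outer_end \<rho>) (tree_edges red adj)"
proof (rule inj_onI, clarsimp simp: tree_edges_def)
  fix r b r' b' assume "red r" "adj r b" "red r'" "adj r' b'" and eq: "outer_end \<rho> (r, b) = outer_end \<rho> (r', b')"
  obtain w where w: "{r, b} = {outer_end \<rho> (r, b), w}" "adj (outer_end \<rho> (r, b)) w"
      "gdist \<rho> (outer_end \<rho> (r, b)) = Suc (gdist \<rho> w)"
    using outer_end_edge[OF \<open>adj r b\<close>] by blast
  obtain w' where w': "{r', b'} = {outer_end \<rho> (r', b'), w'}" "adj (outer_end \<rho> (r', b')) w'"
      "gdist \<rho> (outer_end \<rho> (r', b')) = Suc (gdist \<rho> w')"
    using outer_end_edge[OF \<open>adj r' b'\<close>] by blast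
  have "gdist \<rho> w' = gdist \<rho> w"
    using w(3) w'(3) eq by simp
  then have "w = w'"
    using unique_parent[OF w(3) w(2) _ refl, of w'] w'(2) eq by simp
  then have "{r, b} = {r', b'}"
    using w(1) w'(1) eq by simp
  then show "r = r' \<and> b = b'"
    using \<open>red r\<close> \<open>red r'\<close> adj_colour[OF \<open>adj r b\<close>] adj_colour[OF \<open>adj r' b'\<close>]
    by (auto simp: doubleton_eq_iff)
qed

lemma summable_radial_flow_sq:
  assumes "\<delta>R * \<delta>B > 1"
  shows "(\<lambda>(r, b). (radial_flow \<rho> r b)\<^sup>2) summable_on tree_edges red adj"
proof -
  have "outer_end \<rho> e \<in> - {\<rho>}" if edge: "e \<in> tree_edges red adj" for e
  proof -
    obtain r b where e: "e = (r, b)" "adj r b"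
      using edge unfolding tree_edges_def by blast
    then obtain w where "gdist \<rho> (outer_end \<rho> (r, b)) = Suc (gdist \<rho> w)"
      by (metis outer_end_edge)
    then show ?thesis
      using e by auto
  qed
  then have "outer_end \<rho> ` tree_edges red adj \<subseteq> - {\<rho>}"
    by (rule image_subsetI)
  then have "(\<lambda>v. (radial_weight \<rho> (gdist \<rho> v - 1))\<^sup>2) summable_on outer_end \<rho> ` tree_edges red adj"
    by (rule summable_on_subset_banach[OF summable_radial_weight_sq[OF assms]])
  then have "((\<lambda>v. (radial_weight \<rho> (gdist \<rho> v - 1))\<^sup>2) \<circ> outer_end \<rho>) summable_on tree_edges red adj"
    by (simp only: summable_on_reindex[OF inj_on_outer_end])
  then show ?thesis
    by (rule summable_on_cong[THEN iffD1, rotated])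
       (auto simp: tree_edges_def radial_flow_eq_outer_end)
qed

lemma card_neighbours_ge_2: "card {u. adj v u} \<ge> 2"
  using card_neighbours[of v] \<delta>R_ge_1 \<delta>B_ge_1 unfolding branching_def by auto

lemma exists_other_neighbour:
  obtains u where "adj v u" "u \<noteq> w"
proof -
  have "card ({u. adj v u} - {w}) \<ge> 1"
    using card_neighbours_ge_2[of v] diff_card_le_card_Diff[of "{w}" "{u. adj v u}"] by simp
  then have "{u. adj v u} - {w} \<noteq> {}"
    by (metis card.empty not_one_le_zero)
  then show ?thesis
    using that by blast
qed

lemma exists_path_of_length_2:
  obtains r0 b0 b1 where "red r0" "adj r0 b0" "adj r0 b1" "b0 \<noteq> b1"
proof -
  obtain u where u: "adj undefined u"
    using exists_other_neighbour by blast
  define r0 where "r0 = (if red undefined then undefined else u)"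
  have "red r0"
    unfolding r0_def using adj_colour[OF u] by auto
  obtain b0 where "adj r0 b0"
    using exists_other_neighbour by blast
  moreover obtain b1 where "adj r0 b1" "b1 \<noteq> b0"
    using exists_other_neighbour by blast
  ultimately show ?thesis
    using that \<open>red r0\<close> by blast
qed

text \<open>Each radial flow violates Kirchhoff's law only at its root, by \<open>\<delta> + 1\<close>; a multiple of the
  edge \<open>(r0, b0)\<close> cancels both defects at once.\<close>
definition edge_flow :: "'v \<Rightarrow> 'v \<Rightarrow> 'v \<Rightarrow> 'v \<Rightarrow> real" where
  "edge_flow r0 b0 r b = radial_flow r0 r b + (real \<delta>R + 1) / (real \<delta>B + 1) * radial_flow b0 r b
     - (real \<delta>R + 1) * of_bool (r = r0 \<and> b = b0)"

lemma summable_edge_flow_sq: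
  assumes "\<delta>R * \<delta>B > 1"
  shows "(\<lambda>(r, b). (edge_flow r0 b0 r b)\<^sup>2) summable_on tree_edges red adj"
  unfolding edge_flow_def diff_conv_add_uminus minus_mult_left case_prod_beta
proof (intro square_summable_on_add square_summable_on_cmult)
  show r0: "(\<lambda>e. (radial_flow r0 (fst e) (snd e))\<^sup>2) summable_on tree_edges red adj"
    using summable_radial_flow_sq[OF assms, of r0] unfolding split_def .
  show "(\<lambda>e. (radial_flow b0 (fst e) (snd e))\<^sup>2) summable_on tree_edges red adj"
    using summable_radial_flow_sq[OF assms, of b0] unfolding split_def .
  show "(\<lambda>e. (of_bool (fst e = r0 \<and> snd e = b0) :: real)\<^sup>2) summable_on tree_edges red adj"
    by (rule summable_on_comparison_test[OF r0]) (auto simp: radial_flow_def)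
qed

lemma is_kirchhoff_flow_edge_flow:
  assumes "red r0" "adj r0 b0"
  shows "is_kirchhoff_flow red adj (edge_flow r0 b0)"
proof -
  have "\<not> red b0"
    using adj_colour[OF assms(2)] assms(1) by simp
  have edge_sum: "(\<Sum>u\<in>{u. adj v u}. of_bool (v = x \<and> u = y) :: real) = of_bool (v = x)"
    if "adj x y" for v x y
    using that finite_neighbours[of v] by (cases "v = x") (simp_all add: of_bool_def sum.delta)
  have "(\<Sum>b\<in>{b. adj r b}. edge_flow r0 b0 r b) = 0" if "red r" for r
  proof -
    have "r \<noteq> b0"
      using that \<open>\<not> red b0\<close> by auto
    then show ?thesis
      unfolding edge_flow_def sum_subtractf sum.distrib sum_distrib_left[symmetric] sum_radial_flow
        edge_sum[OF assms(2)]
      using assms(1) by (simp add: branching_def)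
  qed
  moreover have "(\<Sum>r\<in>{r. adj b r}. edge_flow r0 b0 r b) = 0" if "\<not> red b" for b
  proof -
    have "b \<noteq> r0"
      using that assms(1) by auto
    then show ?thesis
      unfolding edge_flow_def sum_subtractf sum.distrib sum_distrib_left[symmetric] radial_flow_sym[of _ _ b]
        sum_radial_flow conj_commute[of "_ = r0"] edge_sum[OF adj_sym[OF assms(2)]]
      using \<open>\<not> red b0\<close> by (simp add: branching_def add.commute)
  qed
  ultimately show ?thesis
    unfolding is_kirchhoff_flow_def by blast
qed

lemma edge_flow_nonzero:
  assumes "\<delta>R * \<delta>B > 1" "red r0" "adj r0 b0" "adj r0 b1" "b0 \<noteq> b1"
  shows "edge_flow r0 b0 r0 b1 \<noteq> 0"
proof -
  have "\<not> red b0"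
    using adj_colour[OF assms(3)] assms(2) by simp
  have "gdist b0 r0 = 1"
    using gdist_adj[OF adj_sym[OF assms(3)], of b0] by simp
  moreover have "gdist b0 b1 = 2"
    using gdist_adj[OF assms(4), of b0] \<open>gdist b0 r0 = 1\<close> assms(5) by auto
  moreover have "level_branching b0 1 = \<delta>R"
    using \<open>\<not> red b0\<close> unfolding level_branching_def by simp
  ultimately have "edge_flow r0 b0 r0 b1 = 1 - (real \<delta>R + 1) / (real \<delta>B + 1) / real \<delta>R"
    unfolding edge_flow_def radial_flow_def using assms(5) by (simp add: numeral_2_eq_2)
  moreover have "(real \<delta>R + 1) / (real \<delta>B + 1) / real \<delta>R \<noteq> 1"
  proof
    assume "(real \<delta>R + 1) / (real \<delta>B + 1) / real \<delta>R = 1"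
    then have "real \<delta>R + 1 = real \<delta>R * (real \<delta>B + 1)"
      using \<delta>R_ge_1 by (simp add: field_simps)
    then have "real (\<delta>R * \<delta>B) = 1"
      by (simp add: algebra_simps)
    then show False
      using assms(1) by (metis of_nat_eq_1_iff less_irrefl)
  qed
  ultimately show ?thesis
    by simp
qed

lemma exists_square_summable_flow:
  assumes "\<delta>R * \<delta>B > 1"
  obtains F where "(\<lambda>(r, b). (F r b)\<^sup>2) summable_on tree_edges red adj" "is_kirchhoff_flow red adj F"
    "\<exists>(r, b) \<in> tree_edges red adj. F r b \<noteq> 0"
proof -
  obtain r0 b0 b1 where e: "red r0" "adj r0 b0" "adj r0 b1" "b0 \<noteq> b1"
    by (rule exists_path_of_length_2)
  moreover have "(r0, b1) \<in> tree_edges red adj"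
    unfolding tree_edges_def using e by simp
  ultimately show ?thesis
    using that summable_edge_flow_sq[OF assms] is_kirchhoff_flow_edge_flow edge_flow_nonzero[OF assms] by blast
qed

end

section \<open>Eigenfunctions from flows\<close>

lemma in_L2_tree_mult:
  fixes F :: "'v \<Rightarrow> 'v \<Rightarrow> real" and g :: "real \<Rightarrow> complex"
  assumes "continuous_on UNIV g"
    and "(\<lambda>(r, b). (F r b)\<^sup>2) summable_on tree_edges red adj"
  shows "in_L2_tree red adj (\<lambda>r b x. of_real (F r b) * g x)"
proof -
  define I where "I = integral {0..1} (\<lambda>x. (cmod (g x))\<^sup>2)"
  have cont: "continuous_on UNIV (\<lambda>x. of_real a * g x)" for a :: real
    by (intro continuous_intros assms(1))
  have integral_eq: "integral {0..1} (\<lambda>x. (cmod (of_real a * g x))\<^sup>2) = a\<^sup>2 * I" for a :: real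
    unfolding I_def by (simp add: norm_mult power_mult_distrib)
  have "(\<lambda>(r, b). (F r b)\<^sup>2 * I) summable_on tree_edges red adj"
    using summable_on_cmult_left[OF assms(2), of I] by (simp add: split_def)
  then have "(\<lambda>(r, b). integral {0..1} (\<lambda>x. (cmod (of_real (F r b) * g x))\<^sup>2)) summable_on tree_edges red adj"
    by (simp add: integral_eq)
  moreover have "(\<lambda>x. (cmod (of_real a * g x))\<^sup>2) integrable_on {0..1}" for a :: real
    by (intro integrable_continuous_interval continuous_intros continuous_on_subset[OF assms(1)]) simp
  ultimately show ?thesis
    unfolding in_L2_tree_def using borel_measurable_continuous_onI[OF cont] by auto
qed

lemma has_vector_derivative_sin_mult:
  fixes a :: real and w :: complex
  shows "((\<lambda>x. of_real a * sin (w * of_real x)) has_vector_derivative of_real a * (w * cos (w * of_real t))) (at t within S)"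
  by (rule has_vector_derivative_real_field) (auto intro!: derivative_eq_intros)

lemma has_vector_derivative_cos_mult:
  fixes a :: real and w :: complex
  shows "((\<lambda>x. of_real a * (w * cos (w * of_real x))) has_vector_derivative of_real a * (- w\<^sup>2 * sin (w * of_real t))) (at t within S)"
  by (rule has_vector_derivative_real_field) (auto intro!: derivative_eq_intros simp: power2_eq_square)

text \<open>Since \<open>sin w = 0\<close>, the function vanishes at every vertex (so it is continuous on the tree), and
  its outgoing derivatives at a vertex are the flow values on the incident edges times \<open>w\<close>
  (times \<open>w cos w\<close> at the blue end).\<close>
lemma kirchhoff_flow_sin_in_dom_L:
  fixes F :: "'v \<Rightarrow> 'v \<Rightarrow> real"
  assumes "sin w = 0" "(\<lambda>(r, b). (F r b)\<^sup>2) summable_on tree_edges red adj" "is_kirchhoff_flow red adj F"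
  shows "in_dom_L red adj (\<lambda>r b x. of_real (F r b) * sin (w * of_real x))
                          (\<lambda>r b x. of_real (F r b) * (- w\<^sup>2 * sin (w * of_real x)))"
proof -
  let ?f = "\<lambda>r b x. of_real (F r b) * sin (w * of_real x)"
  have second_derivative: "\<exists>f'. (\<forall>x\<in>{0..1}. (?f r b has_vector_derivative f' x) (at x within {0..1})) \<and>
      (\<forall>x\<in>{0..1}. ((\<lambda>x. of_real (F r b) * (- w\<^sup>2 * sin (w * of_real x))) has_integral (f' x - f' 0)) {0..x})" for r b
    by (intro exI[of _ "\<lambda>x. of_real (F r b) * (w * cos (w * of_real x))"] conjI ballI
        has_vector_derivative_sin_mult fundamental_theorem_of_calculus has_vector_derivative_cos_mult) auto
  have endpoint_derivative: "vector_derivative (?f r b) (at t within {0..1}) = of_real (F r b) * (w * cos (w * of_real t))"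
    if "t \<in> {0..1}" for r b t
    using that by (intro vector_derivative_within_closed_interval has_vector_derivative_sin_mult) auto
  have "(\<Sum>b\<in>{b. adj r b}. vector_derivative (?f r b) (at 0 within {0..1})) = 0" if "red r" for r
  proof -
    have "(\<Sum>b\<in>{b. adj r b}. vector_derivative (?f r b) (at 0 within {0..1})) = of_real (\<Sum>b\<in>{b. adj r b}. F r b) * w"
      by (simp add: endpoint_derivative sum_distrib_right)
    then show ?thesis
      using assms(3) that unfolding is_kirchhoff_flow_def by simp
  qed
  moreover have "(\<Sum>r\<in>{r. adj b r}. - vector_derivative (?f r b) (at 1 within {0..1})) = 0" if "\<not> red b" for b
  proof -
    have "(\<Sum>r\<in>{r. adj b r}. - vector_derivative (?f r b) (at 1 within {0..1})) = - of_real (\<Sum>r\<in>{r. adj b r}. F r b) * (w * cos w)"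
      by (simp add: endpoint_derivative sum_distrib_right sum_negf)
    then show ?thesis
      using assms(3) that unfolding is_kirchhoff_flow_def by simp
  qed
  moreover have "in_L2_tree red adj ?f" "in_L2_tree red adj (\<lambda>r b x. of_real (F r b) * (- w\<^sup>2 * sin (w * of_real x)))"
    by (intro in_L2_tree_mult[OF _ assms(2)] continuous_intros)+
  ultimately show ?thesis
    using assms(1) second_derivative unfolding in_dom_L_def by simp
qed

lemma kirchhoff_flow_eigenvalue:
  fixes F :: "'v \<Rightarrow> 'v \<Rightarrow> real"
  assumes "w \<noteq> 0" "sin w = 0" "(\<lambda>(r, b). (F r b)\<^sup>2) summable_on tree_edges red adj" "is_kirchhoff_flow red adj F"
    and "\<exists>(r, b) \<in> tree_edges red adj. F r b \<noteq> 0"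
  shows "is_eigenvalue_L red adj (w\<^sup>2)"
proof -
  let ?f = "\<lambda>r b x. of_real (F r b) * sin (w * of_real x)"
  obtain r0 b0 where e: "(r0, b0) \<in> tree_edges red adj" "F r0 b0 \<noteq> 0"
    using assms(5) by blast
  have "integral {0..1} (\<lambda>x. (cmod (?f r0 b0 x))\<^sup>2) \<noteq> 0"
  proof
    assume integral_0: "integral {0..1} (\<lambda>x. (cmod (?f r0 b0 x))\<^sup>2) = 0"
    have cont: "continuous_on (cbox 0 1) (\<lambda>x. (cmod (?f r0 b0 x))\<^sup>2)"
      by (intro continuous_intros)
    then have "((\<lambda>x. (cmod (?f r0 b0 x))\<^sup>2) has_integral 0) (cbox 0 1)"
      using integral_0 integrable_continuous[OF cont] by (simp add: has_integral_integral)
    moreover obtain x where "x \<in> {0..1}" "sin (w * of_real x) \<noteq> 0"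
      using sin_mult_nonzero_somewhere[OF assms(1,2)] by blast
    ultimately have "(cmod (?f r0 b0 x))\<^sup>2 = 0"
      by (intro has_integral_0_cbox_imp_0[OF cont]) auto
    then show False
      using \<open>sin (w * of_real x) \<noteq> 0\<close> e(2) by simp
  qed
  then show ?thesis
    unfolding is_eigenvalue_L_def
    using kirchhoff_flow_sin_in_dom_L[OF assms(2-4)] e(1) by (intro exI) (auto simp: algebra_simps)
qed

theorem lemma4p5:
  fixes \<delta>R \<delta>B :: nat and red :: "'v \<Rightarrow> bool" and adj :: "'v \<Rightarrow> 'v \<Rightarrow> bool"
  assumes "\<delta>R \<ge> 1" and "\<delta>B \<ge> 1"
    and "biregular_tree \<delta>R \<delta>B red adj"
  shows "(sigma2 \<delta>R \<delta>B \<subseteq> \<real> - sigma1 \<delta>R \<delta>B \<and> discrete (sigma2 \<delta>R \<delta>B))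
    \<and> (\<forall>lam. \<delta>R * \<delta>B > 1 \<and> ss lam = 0 \<longrightarrow> lam \<in> sigma2 \<delta>R \<delta>B)
    \<and> (\<forall>lam. lam \<in> sigma2 \<delta>R \<delta>B \<and> ss lam = 0 \<longrightarrow>
            (\<exists>x\<in>{0..1}. Uf \<delta>R \<delta>B lam x \<noteq> 0) \<and> (\<exists>x\<in>{0..1}. Vf \<delta>R \<delta>B lam x \<noteq> 0))
    \<and> (\<forall>lam. lam \<in> sigma2 \<delta>R \<delta>B \<and>
            (\<exists>x\<in>{0..1}. Uf \<delta>R \<delta>B lam x \<noteq> 0) \<and> (\<exists>x\<in>{0..1}. Vf \<delta>R \<delta>B lam x \<noteq> 0) \<longrightarrow>
            is_eigenvalue_L red adj lam)"
proof -
  interpret bireg_tree \<delta>R \<delta>B red adj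
    using assms by unfold_locales
  have "is_eigenvalue_L red adj lam"
    if sigma2: "lam \<in> sigma2 \<delta>R \<delta>B"
      and "\<exists>x\<in>{0..1}. Uf \<delta>R \<delta>B lam x \<noteq> 0" "\<exists>x\<in>{0..1}. Vf \<delta>R \<delta>B lam x \<noteq> 0" for lam
  proof -
    have "ss lam = 0"
      using sigma2_nonvanishing_imp_ss_zero[OF assms(1,2) that] .
    moreover have "lam \<notin> sigma1 \<delta>R \<delta>B"
      using sigma2 unfolding sigma2_def by simp
    ultimately have "\<delta>R * \<delta>B > 1"
      using ss_zero_imp_mult_gt_1[OF assms(1,2)] by blast
    then obtain F where "(\<lambda>(r, b). (F r b)\<^sup>2) summable_on tree_edges red adj" "is_kirchhoff_flow red adj F"
        "\<exists>(r, b) \<in> tree_edges red adj. F r b \<noteq> 0"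
      by (rule exists_square_summable_flow)
    then have "is_eigenvalue_L red adj ((omg lam)\<^sup>2)"
      using kirchhoff_flow_eigenvalue \<open>ss lam = 0\<close> unfolding ss_zero_iff by blast
    then show ?thesis
      by (simp add: omg_def)
  qed
  then show ?thesis
    using sigma2_real_discrete[OF assms(1,2)] ss_zero_in_sigma2
      Uf_nonzero_ss_zero[OF assms(1,2)] Vf_nonzero_ss_zero[OF assms(1,2)] by blast
qed

end
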